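(* Let $r\ge1$, $0<\epsilon<1/4$, $c>0$ and $\lambda=(2/3)^{1/(4r)}$. Let $D(u)$, $u\in[0,1]$, be real antisymmetric $2N\times2N$ matrices with $|D_{p,q}(u)|\le c\epsilon r^2\lambda^{|p-q|}$ for all $p,q,u$. Let $\hat U=\mathcal T\exp[i\int_0^1du\,\hat D(u)]$, where $\hat D(u)=\frac i4\sum_{p,q}D_{p,q}(u)c_pc_q$, and expand $\hat U=\sum_E\omega_EE$ over Majorana monomials, with $\omega_E=2^{-N}\mathrm{tr}(E^\dagger\hat U)$. Then for every Majorana monomial $E$ with fermionic weight $w_f$ and qubit weight $w_q$, $$|\omega_E|\le\epsilon^{w_f/4}\lambda^{w_q}e^{yN},\qquad y=\frac{3\sqrt\epsilon\,c\,r^2}{1-\sqrt\lambda}.$$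
   Context: Majorana operators $c_1,\dots,c_{2N}$ are realized on $N$ qubits by the Jordan–Wigner map: $c_{2j-1}=Z_1\cdots Z_{j-1}X_j$ and $c_{2j}=Z_1\cdots Z_{j-1}Y_j$, where $X_j,Y_j,Z_j$ are Pauli operators on qubit $j$. A Majorana monomial is $E=c_{p_1}\cdots c_{p_k}$ with $p_1<\dots<p_k$; there are $4^N$ of them and they form an operator basis. Its fermionic weight is $w_f(E)=k$. Its qubit weight $w_q(E)$ is the number of qubits on which the Pauli operator $E$ (under Jordan–Wigner) acts nontrivially. $\mathcal T\exp[i\int_0^1du\,\hat D(u)]$ denotes $\hat U(1)$, where $\partial_u\hat U(u)=i\hat D(u)\hat U(u)$ and $\hat U(0)=I$. *)

theory Defs
  imports "HOL-Analysis.Analysis" "Jordan_Normal_Form.Schur_Decomposition"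
begin

text \<open>Operators on N qubits are 2^N x 2^N complex matrices. The computational basis
  state with index a < 2^N has qubit j (0-indexed, j < N) in state bit a j.\<close>

text \<open>Single-qubit Pauli matrix entries: 0 = I, 1 = X, 2 = Y, 3 = Z.\<close>
definition pauli1 :: "nat \<Rightarrow> bool \<Rightarrow> bool \<Rightarrow> complex" where
  "pauli1 k x y =
     (if k = 1 then (if x \<noteq> y then 1 else 0)
      else if k = 2 then (if x \<noteq> y then (if x then \<i> else - \<i>) else 0)
      else if k = 3 then (if x = y then (if x then -1 else 1) else 0)
      else (if x = y then 1 else 0))"

definition pauli_string :: "nat \<Rightarrow> (nat \<Rightarrow> nat) \<Rightarrow> complex mat" where
  "pauli_string N P = Matrix.mat (2^N) (2^N)
     (\<lambda>(a, b). \<Prod>j<N. pauli1 (P j) (bit a j) (bit b j))"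

text \<open>Jordan-Wigner Majorana operators c_p, 1 \<le> p \<le> 2N:
  c_{2j-1} = Z_1 ... Z_{j-1} X_j and c_{2j} = Z_1 ... Z_{j-1} Y_j
  (qubits 1..N of the paper are 0..N-1 here).\<close>
definition majorana :: "nat \<Rightarrow> nat \<Rightarrow> complex mat" where
  "majorana N p = pauli_string N
     (\<lambda>j. if j < (p - 1) div 2 then 3
          else if j = (p - 1) div 2 then (if odd p then 1 else 2)
          else 0)"

definition majorana_monomial :: "nat \<Rightarrow> nat set \<Rightarrow> complex mat" where
  "majorana_monomial N S =
     foldr (\<lambda>p M. majorana N p * M) (sorted_list_of_set S) (1\<^sub>m (2^N))"

definition fermionic_weight :: "nat set \<Rightarrow> nat" where
  "fermionic_weight S = card S"

text \<open>An operator M on N qubits acts trivially on qubit j iff M = I_j \<otimes> M' , i.e. its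
  entries are diagonal in bit j and independent of the value of bit j.\<close>
definition acts_trivially_on :: "nat \<Rightarrow> complex mat \<Rightarrow> bool" where
  "acts_trivially_on j M \<longleftrightarrow>
     (\<forall>a < dim_row M. \<forall>b < dim_col M.
        (bit a j \<noteq> bit b j \<longrightarrow> M $$ (a, b) = 0) \<and>
        M $$ (a, b) = M $$ (flip_bit j a, flip_bit j b))"

definition qubit_weight :: "nat \<Rightarrow> complex mat \<Rightarrow> nat" where
  "qubit_weight N M = card {j. j < N \<and> \<not> acts_trivially_on j M}"

definition quad_ham :: "nat \<Rightarrow> (nat \<Rightarrow> nat \<Rightarrow> real) \<Rightarrow> complex mat" where
  "quad_ham N D = Matrix.mat (2^N) (2^N) (\<lambda>(a, b).
     (\<i> / 4) * (\<Sum>p\<in>{1..2*N}. \<Sum>q\<in>{1..2*N}.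
        complex_of_real (D p q) * (majorana N p * majorana N q) $$ (a, b)))"

definition mat_trace :: "complex mat \<Rightarrow> complex" where
  "mat_trace M = (\<Sum>i<dim_row M. M $$ (i, i))"

definition expansion_coeff :: "nat \<Rightarrow> complex mat \<Rightarrow> complex mat \<Rightarrow> complex" where
  "expansion_coeff N E U = mat_trace (mat_adjoint E * U) / 2^N"

text \<open>U solves dU/du = i Dhat(u) U(u) on [0,1] with U(0) = I, so U 1 is the time-ordered
  exponential T exp[i \<integral>_0^1 Dhat(u) du]. Derivatives are taken entrywise.\<close>
definition solves_tord_exp :: "nat \<Rightarrow> (real \<Rightarrow> complex mat) \<Rightarrow> (real \<Rightarrow> complex mat) \<Rightarrow> bool" where
  "solves_tord_exp N H U \<longleftrightarrow>
     (\<forall>u\<in>{0..1}. U u \<in> carrier_mat (2^N) (2^N)) \<and>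
     U 0 = 1\<^sub>m (2^N) \<and>
     (\<forall>u\<in>{0..1}. \<forall>a < 2^N. \<forall>b < 2^N.
        ((\<lambda>t. U t $$ (a, b)) has_vector_derivative (\<i> * (H u * U u) $$ (a, b)))
          (at u within {0..1}))"

end

theory Submission
  imports Defs
begin

text \<open>The coefficients \<open>\<omega>\<^sub>S(u)\<close> of \<open>U(u)\<close> in the monomial basis obey a
  linear ODE: \<open>c\<^sub>p c\<^sub>q\<close> times a monomial is \<open>\<plusminus>\<close> the monomial of
  \<open>S \<triangle> {p,q}\<close>, so \<open>|\<omega>\<^sub>S'| \<le> \<Sum>\<^sub>p\<^sub>q |D\<^sub>p\<^sub>q|/4 |\<omega>\<^bsub>S \<triangle> {p,q}\<^esub>|\<close>.
  Toggling \<open>p, q\<close> changes the fermionic weight by at most 2 and the qubit weight by at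
  most the number of qubits between the Jordan-Wigner sites of \<open>p\<close> and \<open>q\<close>. Hence for
  the weights \<open>w\<^sub>S = \<epsilon>\<^bsup>|S|/4\<^esup> \<lambda>\<^bsup>w\<^sub>q(S)\<^esup>\<close> the weighted norm
  \<open>\<Phi> = \<Sum>\<^sub>S |\<omega>\<^sub>S|/w\<^sub>S\<close> satisfies \<open>\<Phi>' \<le> y N \<Phi>\<close>, the geometric decay of \<open>D\<close>
  in \<open>|p - q|\<close> paying for the weight ratios. Since \<open>\<Phi>(0) = 1\<close>, Gronwall's inequality
  gives \<open>|\<omega>\<^sub>S(1)| \<le> w\<^sub>S e\<^bsup>yN\<^esup>\<close>.\<close>

lemma not_bit_less_two_power:
  fixes a :: nat assumes "a < 2^N" "N \<le> j" shows "\<not> bit a j"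
proof -
  have "a < 2^j" using assms by (meson less_le_trans one_le_numeral power_increasing)
  then show ?thesis by (simp add: bit_iff_odd)
qed

lemma less_two_power_if_high_bits_zero:
  fixes a :: nat assumes "\<And>j. N \<le> j \<Longrightarrow> \<not> bit a j" shows "a < 2^N"
proof -
  have "take_bit N a = a" by (rule bit_eqI) (metis assms bit_take_bit_iff not_less)
  then show ?thesis by (metis take_bit_nat_less_exp)
qed

lemma flip_bit_less_two_power:
  fixes a :: nat assumes "a < 2^N" "j < N" shows "flip_bit j a < 2^N"
  by (rule less_two_power_if_high_bits_zero)
    (use assms not_bit_less_two_power in \<open>auto simp: bit_flip_bit_iff\<close>)

lemma flip_bit_flip_bit: "flip_bit j (flip_bit j (x::nat)) = x"
  by (rule bit_eqI) (auto simp: bit_flip_bit_iff)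

lemma flip_bit_image_less_two_power:
  assumes "j < N" shows "flip_bit j ` {..<(2::nat)^N} = {..<2^N}"
proof
  show "flip_bit j ` {..<(2::nat)^N} \<subseteq> {..<2^N}" using flip_bit_less_two_power assms by auto
  show "{..<(2::nat)^N} \<subseteq> flip_bit j ` {..<2^N}"
  proof
    fix x :: nat assume "x \<in> {..<2^N}"
    then show "x \<in> flip_bit j ` {..<2^N}"
      using flip_bit_less_two_power[of x N j] assms by (intro image_eqI[of _ _ "flip_bit j x"]) (auto simp: flip_bit_flip_bit)
  qed
qed

lemma bit_eq_less_two_power:
  fixes a b :: nat assumes "a < 2^N" "b < 2^N" "\<And>j. j < N \<Longrightarrow> bit a j = bit b j"
  shows "a = b"
  by (rule bit_eqI) (metis assms not_bit_less_two_power not_less)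

lemma bit_two_power_add:
  fixes c :: nat assumes "c < 2^N"
  shows "bit (2^N + c) j = (j = N \<or> bit c j)"
  using assms not_bit_less_two_power[OF assms]
  by (subst bit_disjunctive_add_iff) (auto simp: bit_exp_iff)

lemma sum_less_two_power_prod_bits:
  fixes h :: "nat \<Rightarrow> bool \<Rightarrow> 'a::comm_semiring_1"
  shows "(\<Sum>c::nat<2^N. \<Prod>j<N. h j (bit c j)) = (\<Prod>j<N. h j False + h j True)"
proof (induction N)
  case 0
  then show ?case by simp
next
  case (Suc N)
  let ?high = "(\<lambda>c::nat. 2^N + c) ` {..<2^N}"
  have split: "{..<(2::nat)^Suc N} = {..<2^N} \<union> ?high"
  proof -
    { fix x :: nat assume "x < 2^Suc N" "\<not> x < 2^N"
      then have "x \<in> ?high" by (auto intro!: image_eqI[of _ _ "x - 2^N"]) }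
    then show ?thesis by auto
  qed
  have low: "(\<Sum>c::nat<2^N. \<Prod>j<Suc N. h j (bit c j))
      = (\<Sum>c::nat<2^N. \<Prod>j<N. h j (bit c j)) * h N False"
    by (simp add: sum_distrib_right not_bit_less_two_power)
  have "(\<Sum>c\<in>?high. \<Prod>j<Suc N. h j (bit c j)) = (\<Sum>c::nat<2^N. \<Prod>j<Suc N. h j (bit (2^N + c) j))"
    by (subst sum.reindex) (auto simp: inj_on_def)
  also have "\<dots> = (\<Sum>c::nat<2^N. (\<Prod>j<N. h j (bit c j)) * h N True)"
    by (rule sum.cong) (auto simp: bit_two_power_add intro!: prod.cong)
  finally have high: "(\<Sum>c\<in>?high. \<Prod>j<Suc N. h j (bit c j))
      = (\<Sum>c::nat<2^N. \<Prod>j<N. h j (bit c j)) * h N True"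
    by (simp add: sum_distrib_right)
  have "(\<Sum>c::nat<2^Suc N. \<Prod>j<Suc N. h j (bit c j))
      = (\<Sum>c::nat<2^N. \<Prod>j<Suc N. h j (bit c j)) + (\<Sum>c\<in>?high. \<Prod>j<Suc N. h j (bit c j))"
    unfolding split by (rule sum.union_disjoint) auto
  also have "\<dots> = (\<Prod>j<Suc N. h j False + h j True)"
    unfolding low high Suc by (simp add: distrib_left)
  finally show ?case .
qed

lemma index_mult_mat_sum:
  assumes "dim_col A = n" "dim_row B = n" "i < dim_row A" "j < dim_col B"
  shows "(A * B) $$ (i, j) = (\<Sum>k<n. A $$ (i, k) * B $$ (k, j))"
  using assms by (simp add: scalar_prod_def atLeast0LessThan)

lemma smult_smult_mat: "(a::'a::comm_semiring_1) \<cdot>\<^sub>m (b \<cdot>\<^sub>m A) = (a * b) \<cdot>\<^sub>m A"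
  by (rule eq_matI) (auto simp: mult.assoc)

lemma one_smult_mat [simp]: "(1::'a::semiring_1) \<cdot>\<^sub>m A = A"
  by (rule eq_matI) auto

lemma mat_adjoint_dim [simp]:
  fixes A :: "complex mat"
  shows "dim_row (mat_adjoint A) = dim_col A" "dim_col (mat_adjoint A) = dim_row A"
  by (auto simp: mat_adjoint_def)

lemma index_mat_adjoint:
  fixes A :: "complex mat"
  shows "i < dim_col A \<Longrightarrow> j < dim_row A \<Longrightarrow> mat_adjoint A $$ (i, j) = cnj (A $$ (j, i))"
  by (simp add: mat_adjoint_def mat_of_rows_index)

lemma mat_adjoint_mult:
  fixes A B :: "complex mat"
  assumes "dim_col A = dim_row B"
  shows "mat_adjoint (A * B) = mat_adjoint B * mat_adjoint A"
proof (rule eq_matI)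
  fix i j assume "i < dim_row (mat_adjoint B * mat_adjoint A)" "j < dim_col (mat_adjoint B * mat_adjoint A)"
  then have i: "i < dim_col B" and j: "j < dim_row A" by auto
  have "mat_adjoint (A * B) $$ (i, j) = cnj ((A * B) $$ (j, i))" using i j by (simp add: index_mat_adjoint)
  also have "\<dots> = cnj (\<Sum>k<dim_row B. A $$ (j, k) * B $$ (k, i))"
    using i j assms by (subst index_mult_mat_sum[of _ "dim_row B"]) auto
  also have "\<dots> = (\<Sum>k<dim_row B. mat_adjoint B $$ (i, k) * mat_adjoint A $$ (k, j))"
    using i j assms by (auto simp: index_mat_adjoint mult.commute intro: sum.cong)
  also have "\<dots> = (mat_adjoint B * mat_adjoint A) $$ (i, j)"
    using i j assms by (subst index_mult_mat_sum[of _ "dim_row B"]) auto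
  finally show "mat_adjoint (A * B) $$ (i, j) = (mat_adjoint B * mat_adjoint A) $$ (i, j)" .
qed auto

lemma mat_adjoint_smult: fixes A :: "complex mat" shows "mat_adjoint (a \<cdot>\<^sub>m A) = cnj a \<cdot>\<^sub>m mat_adjoint A"
  by (rule eq_matI) (auto simp: index_mat_adjoint)

lemma mat_trace_smult:
  assumes "dim_row A = dim_col A" shows "mat_trace (a \<cdot>\<^sub>m A) = a * mat_trace A"
  unfolding mat_trace_def sum_distrib_left using assms by (intro sum.cong) auto

lemma mat_trace_adjoint:
  "A \<in> carrier_mat n n \<Longrightarrow> mat_trace (mat_adjoint A) = cnj (mat_trace (A :: complex mat))"
  by (auto simp: mat_trace_def index_mat_adjoint)

lemma mat_trace_adjoint_mult:
  assumes "A \<in> carrier_mat n n" "V \<in> carrier_mat n n"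
  shows "mat_trace (mat_adjoint A * V) = (\<Sum>i<n. \<Sum>k<n. cnj (A $$ (k, i)) * V $$ (k, i))"
  unfolding mat_trace_def using assms
  by (intro sum.cong) (auto simp: index_mult_mat_sum[of _ n] index_mat_adjoint simp del: index_mult_mat(1))

lemma mat_trace_mult_mult:
  fixes A B V :: "complex mat"
  assumes "A \<in> carrier_mat n n" "B \<in> carrier_mat n n" "V \<in> carrier_mat n n"
  shows "mat_trace (A * (B * V)) = (\<Sum>k<n. \<Sum>l<n. B $$ (k, l) * (\<Sum>i<n. A $$ (i, k) * V $$ (l, i)))"
proof -
  have "mat_trace (A * (B * V)) = (\<Sum>i<n. \<Sum>k<n. A $$ (i, k) * (\<Sum>l<n. B $$ (k, l) * V $$ (l, i)))"
    unfolding mat_trace_def using assms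
    by (intro sum.cong) (auto simp: index_mult_mat_sum[of _ n] simp del: index_mult_mat(1))
  also have "\<dots> = (\<Sum>i<n. \<Sum>k<n. \<Sum>l<n. B $$ (k, l) * (A $$ (i, k) * V $$ (l, i)))"
    by (simp add: sum_distrib_left mult_ac)
  also have "\<dots> = (\<Sum>k<n. \<Sum>l<n. \<Sum>i<n. B $$ (k, l) * (A $$ (i, k) * V $$ (l, i)))"
    by (subst sum.swap) (intro sum.cong refl sum.swap)
  also have "\<dots> = (\<Sum>k<n. \<Sum>l<n. B $$ (k, l) * (\<Sum>i<n. A $$ (i, k) * V $$ (l, i)))"
    by (simp add: sum_distrib_left)
  finally show ?thesis .
qed

section \<open>Pauli strings\<close>

text \<open>Single-qubit products \<open>\<sigma>\<^sub>k \<sigma>\<^sub>l = pauli_phase k l \<cdot> \<sigma>\<^bsub>pauli_index k l\<^esub>\<close>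
  (indices \<open>X = 1, Y = 2, Z = 3\<close> combine like the Klein four-group, as \<open>XY = \<i>Z\<close> etc.).\<close>

definition pauli_index :: "nat \<Rightarrow> nat \<Rightarrow> nat" where
  "pauli_index k l = (if k = 0 then l else if l = 0 then k else if k = l then 0 else 6 - k - l)"

definition pauli_phase :: "nat \<Rightarrow> nat \<Rightarrow> complex" where
  "pauli_phase k l = (if (k = 1 \<and> l = 2) \<or> (k = 2 \<and> l = 3) \<or> (k = 3 \<and> l = 1) then \<i>
             else if (k = 2 \<and> l = 1) \<or> (k = 3 \<and> l = 2) \<or> (k = 1 \<and> l = 3) then - \<i> else 1)"

lemma less_4_cases: "(k::nat) < 4 \<Longrightarrow> k = 0 \<or> k = 1 \<or> k = 2 \<or> k = 3" by arith

lemma pauli_index_less_4: "k < 4 \<Longrightarrow> l < 4 \<Longrightarrow> pauli_index k l < 4"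
  using less_4_cases[of k] less_4_cases[of l] by (auto simp: pauli_index_def)

lemma pauli_index_self [simp]: "pauli_index k k = 0" by (simp add: pauli_index_def)

lemma pauli_index_commute: "pauli_index k l = pauli_index l k" by (simp add: pauli_index_def add.commute)

lemma pauli_phase_self [simp]: "pauli_phase k k = 1" by (auto simp: pauli_phase_def)

lemma pauli_phase_swap:
  "pauli_phase k l = (if k \<in> {1,2,3} \<and> l \<in> {1,2,3} \<and> k \<noteq> l then - pauli_phase l k else pauli_phase l k)"
proof (cases "k \<in> {1,2,3} \<and> l \<in> {1,2,3}")
  case True
  then consider "k = 1" | "k = 2" | "k = 3" by auto
  then show ?thesis using True by cases (auto simp: pauli_phase_def)
next
  case False
  then have "pauli_phase k l = 1" "pauli_phase l k = 1" unfolding pauli_phase_def by auto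
  moreover have "\<not> (k \<in> {1,2,3} \<and> l \<in> {1,2,3} \<and> k \<noteq> l)" using False by blast
  ultimately show ?thesis by (subst if_not_P) simp_all
qed

lemma pauli1_mult:
  assumes "k < 4" "l < 4"
  shows "pauli1 k a False * pauli1 l False b + pauli1 k a True * pauli1 l True b
         = pauli_phase k l * pauli1 (pauli_index k l) a b"
  using less_4_cases[OF assms(1)] less_4_cases[OF assms(2)]
  by (cases a; cases b) (auto simp: pauli1_def pauli_phase_def pauli_index_def)

lemma pauli_string_dim [simp]:
  "dim_row (pauli_string N P) = 2^N" "dim_col (pauli_string N P) = 2^N"
  "pauli_string N P \<in> carrier_mat (2^N) (2^N)"
  by (auto simp: pauli_string_def)

lemma index_pauli_string:
  "a < 2^N \<Longrightarrow> b < 2^N \<Longrightarrow> pauli_string N P $$ (a, b) = (\<Prod>j<N. pauli1 (P j) (bit a j) (bit b j))"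
  by (simp add: pauli_string_def)

lemma pauli_string_mult:
  assumes "\<forall>j<N. P j < 4" "\<forall>j<N. Q j < 4"
  shows "pauli_string N P * pauli_string N Q
       = (\<Prod>j<N. pauli_phase (P j) (Q j)) \<cdot>\<^sub>m pauli_string N (\<lambda>j. pauli_index (P j) (Q j))"
proof (rule eq_matI)
  fix a b assume "a < dim_row ((\<Prod>j<N. pauli_phase (P j) (Q j)) \<cdot>\<^sub>m pauli_string N (\<lambda>j. pauli_index (P j) (Q j)))"
    "b < dim_col ((\<Prod>j<N. pauli_phase (P j) (Q j)) \<cdot>\<^sub>m pauli_string N (\<lambda>j. pauli_index (P j) (Q j)))"
  then have a: "a < 2^N" and b: "b < 2^N" by auto
  have "(pauli_string N P * pauli_string N Q) $$ (a, b)
      = (\<Sum>c::nat<2^N. \<Prod>j<N. pauli1 (P j) (bit a j) (bit c j) * pauli1 (Q j) (bit c j) (bit b j))"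
    using a b by (subst index_mult_mat_sum[of _ "2^N"]) (simp_all add: index_pauli_string prod.distrib)
  also have "\<dots> = (\<Prod>j<N. pauli1 (P j) (bit a j) False * pauli1 (Q j) False (bit b j)
                     + pauli1 (P j) (bit a j) True * pauli1 (Q j) True (bit b j))"
    by (rule sum_less_two_power_prod_bits)
  also have "\<dots> = (\<Prod>j<N. pauli_phase (P j) (Q j) * pauli1 (pauli_index (P j) (Q j)) (bit a j) (bit b j))"
    by (rule prod.cong) (use assms pauli1_mult in auto)
  also have "\<dots> = ((\<Prod>j<N. pauli_phase (P j) (Q j)) \<cdot>\<^sub>m pauli_string N (\<lambda>j. pauli_index (P j) (Q j))) $$ (a, b)"
    using a b by (simp add: index_pauli_string prod.distrib)
  finally show "(pauli_string N P * pauli_string N Q) $$ (a, b) = \<dots>" .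
qed auto

lemma mat_trace_pauli_string_eq_0:
  assumes "j < N" "Q j \<in> {1,2,3}"
  shows "mat_trace (pauli_string N Q) = 0"
proof -
  have "mat_trace (pauli_string N Q) = (\<Sum>c::nat<2^N. \<Prod>j<N. pauli1 (Q j) (bit c j) (bit c j))"
    by (simp add: mat_trace_def index_pauli_string)
  also have "\<dots> = (\<Prod>j<N. pauli1 (Q j) False False + pauli1 (Q j) True True)"
    by (rule sum_less_two_power_prod_bits)
  also have "\<dots> = 0"
    using assms by (intro prod_zero bexI[of _ j]) (auto simp: pauli1_def)
  finally show ?thesis .
qed

lemma pauli_string_identity:
  assumes "\<forall>j<N. Q j = 0"
  shows "pauli_string N Q = 1\<^sub>m (2^N)"
proof (rule eq_matI)
  fix a b assume "a < dim_row (1\<^sub>m (2^N) :: complex mat)" "b < dim_col (1\<^sub>m (2^N) :: complex mat)"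
  then have a: "a < 2^N" and b: "b < 2^N" by auto
  show "pauli_string N Q $$ (a, b) = 1\<^sub>m (2^N) $$ (a, b)"
  proof (cases "a = b")
    case True then show ?thesis using a b assms by (simp add: index_pauli_string pauli1_def)
  next
    case False
    then obtain j where j: "j < N" "bit a j \<noteq> bit b j" using bit_eq_less_two_power[OF a b] by blast
    then show ?thesis using a b assms False
      by (simp add: index_pauli_string) (intro prod_zero bexI[of _ j], auto simp: pauli1_def)
  qed
qed auto

lemma mat_adjoint_pauli_string: "mat_adjoint (pauli_string N P) = pauli_string N P"
proof -
  have "cnj (pauli1 k x y) = pauli1 k y x" for k x y by (auto simp: pauli1_def)
  then show ?thesis by (intro eq_matI) (auto simp: index_mat_adjoint index_pauli_string)
qed

section \<open>Jordan-Wigner Majorana operators\<close>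

definition jw_code :: "nat \<Rightarrow> nat \<Rightarrow> nat" where
  "jw_code p j = (if j < (p - 1) div 2 then 3
          else if j = (p - 1) div 2 then (if odd p then 1 else 2) else 0)"

lemma majorana_eq_pauli_string: "majorana N p = pauli_string N (jw_code p)"
  unfolding majorana_def jw_code_def by (intro arg_cong[where f="pauli_string N"] ext) simp

lemma jw_code_less_4: "jw_code p j < 4" by (simp add: jw_code_def)

lemma majorana_dim [simp]: "majorana N p \<in> carrier_mat (2^N) (2^N)"
  "dim_row (majorana N p) = 2^N" "dim_col (majorana N p) = 2^N"
  by (auto simp: majorana_eq_pauli_string)

lemma mat_adjoint_majorana: "mat_adjoint (majorana N p) = majorana N p"
  by (simp add: majorana_eq_pauli_string mat_adjoint_pauli_string)

lemma majorana_square: "majorana N p * majorana N p = 1\<^sub>m (2^N)"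
  by (simp add: majorana_eq_pauli_string pauli_string_mult jw_code_less_4 pauli_string_identity)

lemma majorana_mult_majorana:
  "majorana N p * majorana N q
     = (\<Prod>j<N. pauli_phase (jw_code p j) (jw_code q j)) \<cdot>\<^sub>m pauli_string N (\<lambda>j. pauli_index (jw_code p j) (jw_code q j))"
  by (simp add: majorana_eq_pauli_string pauli_string_mult jw_code_less_4)

text \<open>Distinct Majoranas anticommute because their Paulis anticommute on exactly one qubit.\<close>

lemma jw_code_anticommuting_site:
  assumes "p \<noteq> q" "1 \<le> p" "1 \<le> q"
  shows "(jw_code p j \<in> {1,2,3} \<and> jw_code q j \<in> {1,2,3} \<and> jw_code p j \<noteq> jw_code q j)
         \<longleftrightarrow> j = min ((p - 1) div 2) ((q - 1) div 2)"
proof -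
  have "(p - 1) div 2 = (q - 1) div 2 \<Longrightarrow> odd p \<noteq> odd q" using assms by presburger
  then show ?thesis by (auto simp: jw_code_def min_def split: if_splits)
qed

lemma majorana_anticommute:
  assumes "p \<noteq> q" "1 \<le> p" "1 \<le> q" "p \<le> 2*N" "q \<le> 2*N"
  shows "majorana N p * majorana N q = (-1) \<cdot>\<^sub>m (majorana N q * majorana N p)"
proof -
  define j0 where "j0 = min ((p - 1) div 2) ((q - 1) div 2)"
  let ?ph = "\<lambda>p q j. pauli_phase (jw_code p j) (jw_code q j)"
  have j0: "j0 < N" using assms unfolding j0_def by (auto simp: min_def)
  note swap = jw_code_anticommuting_site[OF assms(1-3)]
  have "?ph p q j0 = - ?ph q p j0"
    using swap[of j0] unfolding j0_def by (subst pauli_phase_swap) auto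
  moreover have "(\<Prod>j\<in>{..<N} - {j0}. ?ph p q j) = (\<Prod>j\<in>{..<N} - {j0}. ?ph q p j)"
    using swap unfolding j0_def by (intro prod.cong refl) (subst pauli_phase_swap, auto)
  ultimately have "(\<Prod>j<N. ?ph p q j) = - (\<Prod>j<N. ?ph q p j)"
    using j0 by (simp add: prod.remove[of "{..<N}" j0])
  then show ?thesis
    by (simp add: majorana_mult_majorana pauli_index_commute[of "jw_code p _"] smult_smult_mat)
qed

section \<open>Majorana monomials\<close>

definition toggle :: "nat set \<Rightarrow> nat \<Rightarrow> nat set" where
  "toggle S p = (if p \<in> S then S - {p} else insert p S)"

definition toggle_pair :: "nat \<Rightarrow> nat \<Rightarrow> nat set \<Rightarrow> nat set" where
  "toggle_pair p q S = toggle (toggle S p) q"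

lemma toggle_toggle [simp]: "toggle (toggle S p) p = S" by (auto simp: toggle_def)

lemma toggle_commute: "toggle (toggle S p) q = toggle (toggle S q) p" by (auto simp: toggle_def)

lemma toggle_pair_swap_inverse: "toggle_pair q p (toggle_pair p q S) = S"
  by (simp add: toggle_pair_def)

lemma toggle_pair_involution [simp]: "toggle_pair p q (toggle_pair p q S) = S"
  by (metis toggle_pair_def toggle_commute toggle_toggle)

lemma toggle_subset: "S \<subseteq> {1..2*N} \<Longrightarrow> p \<in> {1..2*N} \<Longrightarrow> toggle S p \<subseteq> {1..2*N}"
  by (auto simp: toggle_def)

lemma toggle_pair_subset:
  "S \<subseteq> {1..2*N} \<Longrightarrow> p \<in> {1..2*N} \<Longrightarrow> q \<in> {1..2*N} \<Longrightarrow> toggle_pair p q S \<subseteq> {1..2*N}"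
  unfolding toggle_pair_def by (intro toggle_subset) auto

lemma card_le_card_toggle_pair: "finite S \<Longrightarrow> card S \<le> card (toggle_pair p q S) + 2"
  unfolding toggle_pair_def toggle_def by (auto simp: card_insert_if card_Diff1_le)

lemma majorana_monomial_carrier [simp]: "majorana_monomial N S \<in> carrier_mat (2^N) (2^N)"
proof -
  have "foldr (\<lambda>p M. majorana N p * M) xs (1\<^sub>m (2^N)) \<in> carrier_mat (2^N) (2^N)" for xs
    by (induction xs) auto
  then show ?thesis by (simp add: majorana_monomial_def)
qed

lemma majorana_monomial_dim [simp]:
  "dim_row (majorana_monomial N S) = 2^N" "dim_col (majorana_monomial N S) = 2^N"
  using carrier_matD[OF majorana_monomial_carrier[of N S]] by auto

lemma majorana_monomial_empty: "majorana_monomial N {} = 1\<^sub>m (2^N)"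
  by (simp add: majorana_monomial_def)

lemma majorana_monomial_insert_min:
  assumes "finite T" "\<forall>x\<in>T. m < x"
  shows "majorana_monomial N (insert m T) = majorana N m * majorana_monomial N T"
proof -
  have "Min (insert m T) = m" using assms by (auto intro!: Min_eqI)
  moreover have "insert m T - {m} = T" using assms by auto
  ultimately have "sorted_list_of_set (insert m T) = m # sorted_list_of_set T"
    using sorted_list_of_set_nonempty[of "insert m T"] assms by auto
  then show ?thesis by (simp add: majorana_monomial_def)
qed

lemma majorana_mult_monomial_insert_min:
  assumes mp: "m < p" and "1 \<le> m" "p \<le> 2*N" and T: "finite T" "\<forall>x\<in>T. m < x"
    and s: "majorana N p * majorana_monomial N T = s \<cdot>\<^sub>m majorana_monomial N (toggle T p)"
  shows "majorana N p * majorana_monomial N (insert m T) = (- s) \<cdot>\<^sub>m majorana_monomial N (toggle (insert m T) p)"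
proof -
  have toggle_insert: "toggle (insert m T) p = insert m (toggle T p)" using mp by (auto simp: toggle_def)
  have toggle_above: "\<forall>x\<in>toggle T p. m < x" "finite (toggle T p)" using mp T by (auto simp: toggle_def)
  have anti: "majorana N p * majorana N m = (-1) \<cdot>\<^sub>m (majorana N m * majorana N p)"
    using assms by (intro majorana_anticommute) auto
  have "majorana N p * majorana_monomial N (insert m T) = (majorana N p * majorana N m) * majorana_monomial N T"
    unfolding majorana_monomial_insert_min[OF T]
    by (subst assoc_mult_mat[of _ "2^N" "2^N" _ "2^N" _ "2^N"]) auto
  also have "\<dots> = (-1) \<cdot>\<^sub>m ((majorana N m * majorana N p) * majorana_monomial N T)"
    unfolding anti by (subst mult_smult_assoc_mat[of _ "2^N" "2^N"]) auto
  also have "\<dots> = (-1) \<cdot>\<^sub>m (majorana N m * (s \<cdot>\<^sub>m majorana_monomial N (toggle T p)))"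
    by (subst assoc_mult_mat[of _ "2^N" "2^N" _ "2^N" _ "2^N"]) (auto simp: s)
  also have "\<dots> = (- s) \<cdot>\<^sub>m majorana_monomial N (toggle (insert m T) p)"
    unfolding toggle_insert majorana_monomial_insert_min[OF toggle_above(2,1)]
    by (subst mult_smult_distrib[of _ "2^N" "2^N"]) (auto simp: smult_smult_mat)
  finally show ?thesis .
qed

text \<open>Left multiplication by \<open>c\<^sub>p\<close> moves \<open>c\<^sub>p\<close> past the smaller factors, collecting a
  sign from each, and then either cancels it (\<open>c\<^sub>p\<^sup>2 = 1\<close>) or leaves it in sorted position.\<close>

lemma majorana_mult_monomial:
  assumes "S \<subseteq> {1..2*N}" "p \<in> {1..2*N}"
  shows "\<exists>s::complex. (s = 1 \<or> s = -1) \<and>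
           majorana N p * majorana_monomial N S = s \<cdot>\<^sub>m majorana_monomial N (toggle S p)"
  using assms
proof (induction "card S" arbitrary: S rule: less_induct)
  case less
  have finS: "finite S" using less.prems finite_subset by blast
  show ?case
  proof (cases "\<forall>x\<in>S. p < x")
    case True
    then have "majorana_monomial N (toggle S p) = majorana N p * majorana_monomial N S"
      using majorana_monomial_insert_min[OF finS, of p N] by (auto simp: toggle_def)
    then show ?thesis by (intro exI[of _ 1]) simp
  next
    case False
    then obtain x where x: "x \<in> S" "x \<le> p" by auto
    define m where "m = Min S"
    define S' where "S' = S - {m}"
    have mS: "m \<in> S" using x finS unfolding m_def by (metis Min_in empty_iff)
    have pm: "m \<le> p" using x finS unfolding m_def by (meson Min_le order_trans)
    have S'm: "\<forall>x\<in>S'. m < x" using finS unfolding S'_def m_def by (auto intro: le_neq_trans)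
    have SS': "S = insert m S'" using mS S'_def by auto
    have finS': "finite S'" using finS S'_def by auto
    show ?thesis
    proof (cases "p = m")
      case True
      have "toggle S p = S'" using True mS S'_def by (simp add: toggle_def)
      moreover have "majorana N p * majorana_monomial N S = majorana_monomial N S'"
        unfolding SS' majorana_monomial_insert_min[OF finS' S'm] True
        by (subst assoc_mult_mat[symmetric, of _ "2^N" "2^N" _ "2^N" _ "2^N"]) (auto simp: majorana_square)
      ultimately show ?thesis by (intro exI[of _ 1]) simp
    next
      case False
      have "card S' < card S" using mS finS S'_def by (metis card_Diff1_less)
      moreover have "S' \<subseteq> {1..2*N}" using less.prems S'_def by auto
      ultimately obtain s where s: "s = 1 \<or> s = -1"
        "majorana N p * majorana_monomial N S' = s \<cdot>\<^sub>m majorana_monomial N (toggle S' p)"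
        using less.hyps less.prems(2) by blast
      have "majorana N p * majorana_monomial N S = (- s) \<cdot>\<^sub>m majorana_monomial N (toggle S p)"
        unfolding SS' using False pm mS less.prems finS' S'm s(2)
        by (intro majorana_mult_monomial_insert_min) auto
      then show ?thesis using s(1) by (intro exI[of _ "-s"]) auto
    qed
  qed
qed

lemma majorana_pair_mult_monomial:
  assumes "S \<subseteq> {1..2*N}" "p \<in> {1..2*N}" "q \<in> {1..2*N}"
  shows "\<exists>s::complex. (s = 1 \<or> s = -1) \<and>
           majorana N q * (majorana N p * majorana_monomial N S) = s \<cdot>\<^sub>m majorana_monomial N (toggle_pair p q S)"
proof -
  obtain s1 where s1: "s1 = 1 \<or> s1 = -1"
    "majorana N p * majorana_monomial N S = s1 \<cdot>\<^sub>m majorana_monomial N (toggle S p)"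
    using majorana_mult_monomial[OF assms(1,2)] by blast
  obtain s2 where s2: "s2 = 1 \<or> s2 = -1"
    "majorana N q * majorana_monomial N (toggle S p) = s2 \<cdot>\<^sub>m majorana_monomial N (toggle_pair p q S)"
    using majorana_mult_monomial[OF toggle_subset[OF assms(1,2)] assms(3)] unfolding toggle_pair_def by blast
  have "majorana N q * (majorana N p * majorana_monomial N S)
      = s1 \<cdot>\<^sub>m (majorana N q * majorana_monomial N (toggle S p))"
    unfolding s1(2) by (rule mult_smult_distrib[of _ "2^N" "2^N"]) auto
  also have "\<dots> = (s1 * s2) \<cdot>\<^sub>m majorana_monomial N (toggle_pair p q S)"
    unfolding s2(2) by (simp add: smult_smult_mat)
  finally show ?thesis using s1(1) s2(1) by (intro exI[of _ "s1 * s2"]) auto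
qed

lemma mat_trace_adjoint_monomial_pair:
  fixes V :: "complex mat"
  assumes S: "S \<subseteq> {1..2*N}" and p: "p \<in> {1..2*N}" and q: "q \<in> {1..2*N}"
    and V: "V \<in> carrier_mat (2^N) (2^N)"
  shows "cmod (mat_trace (mat_adjoint (majorana_monomial N S) * ((majorana N p * majorana N q) * V)))
       = cmod (mat_trace (mat_adjoint (majorana_monomial N (toggle_pair p q S)) * V))"
proof -
  obtain s where s: "s = 1 \<or> s = -1"
    "majorana N q * (majorana N p * majorana_monomial N S) = s \<cdot>\<^sub>m majorana_monomial N (toggle_pair p q S)"
    using majorana_pair_mult_monomial[OF S p q] by blast
  let ?E = "majorana_monomial N S"
  have "mat_adjoint ?E * (majorana N p * majorana N q) = mat_adjoint ?E * majorana N p * majorana N q"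
    by (rule assoc_mult_mat[symmetric, of _ "2^N" "2^N" _ "2^N" _ "2^N"]) auto
  also have "\<dots> = mat_adjoint (majorana N q * (majorana N p * ?E))"
    by (simp add: mat_adjoint_mult mat_adjoint_majorana)
  also have "\<dots> = s \<cdot>\<^sub>m mat_adjoint (majorana_monomial N (toggle_pair p q S))"
    using s by (auto simp: mat_adjoint_smult)
  finally have e: "mat_adjoint ?E * (majorana N p * majorana N q)
      = s \<cdot>\<^sub>m mat_adjoint (majorana_monomial N (toggle_pair p q S))" .
  have "mat_adjoint ?E * ((majorana N p * majorana N q) * V) = (mat_adjoint ?E * (majorana N p * majorana N q)) * V"
    using V by (subst assoc_mult_mat[of _ "2^N" "2^N" _ "2^N" _ "2^N"]) auto
  also have "\<dots> = s \<cdot>\<^sub>m (mat_adjoint (majorana_monomial N (toggle_pair p q S)) * V)"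
    unfolding e using V by (subst mult_smult_assoc_mat[of _ "2^N" "2^N"]) auto
  finally show ?thesis using s(1) V by (auto simp: mat_trace_smult norm_mult)
qed

text \<open>The Pauli label of \<open>c\<^sub>p\<^sub>1 \<cdots> c\<^sub>p\<^sub>k\<close> on each qubit, up to a global phase.\<close>

definition monomial_code :: "nat list \<Rightarrow> nat \<Rightarrow> nat" where
  "monomial_code xs j = foldr (\<lambda>p acc. pauli_index (jw_code p j) acc) xs 0"

lemma monomial_code_less_4: "monomial_code xs j < 4"
  by (induction xs) (auto simp: monomial_code_def pauli_index_less_4 jw_code_less_4)

lemma majorana_product_eq_pauli_string:
  "\<exists>\<mu>. foldr (\<lambda>p M. majorana N p * M) xs (1\<^sub>m (2^N)) = \<mu> \<cdot>\<^sub>m pauli_string N (monomial_code xs)"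
proof (induction xs)
  case Nil
  then show ?case by (intro exI[of _ 1]) (simp add: monomial_code_def pauli_string_identity)
next
  case (Cons p xs)
  then obtain \<mu> where \<mu>: "foldr (\<lambda>p M. majorana N p * M) xs (1\<^sub>m (2^N)) = \<mu> \<cdot>\<^sub>m pauli_string N (monomial_code xs)"
    by blast
  have "foldr (\<lambda>p M. majorana N p * M) (p # xs) (1\<^sub>m (2^N)) = \<mu> \<cdot>\<^sub>m (majorana N p * pauli_string N (monomial_code xs))"
    unfolding foldr.simps o_apply \<mu> by (rule mult_smult_distrib[of _ "2^N" "2^N"]) auto
  also have "\<dots> = (\<mu> * (\<Prod>j<N. pauli_phase (jw_code p j) (monomial_code xs j))) \<cdot>\<^sub>m pauli_string N (monomial_code (p # xs))"
  proof -
    have "(\<lambda>j. pauli_index (jw_code p j) (monomial_code xs j)) = monomial_code (p # xs)"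
      by (auto simp: monomial_code_def)
    then show ?thesis
      by (simp add: majorana_eq_pauli_string pauli_string_mult jw_code_less_4 monomial_code_less_4 smult_smult_mat)
  qed
  finally show ?case by blast
qed

text \<open>On the site of the largest index only the Majoranas of that site act, so the monomial
  carries a non-identity Pauli there.\<close>

lemma monomial_code_top_site:
  assumes "distinct xs" "\<forall>p\<in>set xs. 1 \<le> p \<and> (p - 1) div 2 \<le> j"
  shows "monomial_code xs j
       = pauli_index (if 2*j+1 \<in> set xs then 1 else 0) (if 2*j+2 \<in> set xs then 2 else 0)"
  using assms
proof (induction xs)
  case Nil
  then show ?case by (simp add: monomial_code_def pauli_index_def)
next
  case (Cons p xs)
  then have IH: "monomial_code xs j
      = pauli_index (if 2*j+1 \<in> set xs then 1 else 0) (if 2*j+2 \<in> set xs then 2 else 0)"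
    and pxs: "p \<notin> set xs" and p1: "1 \<le> p" "(p - 1) div 2 \<le> j" by auto
  have step: "monomial_code (p # xs) j = pauli_index (jw_code p j) (monomial_code xs j)"
    by (simp add: monomial_code_def)
  consider "(p - 1) div 2 < j" | "p = 2*j+1" | "p = 2*j+2" using p1 by linarith
  then show ?case
    by cases (use step IH pxs in \<open>auto simp: jw_code_def pauli_index_def\<close>)
qed

lemma mat_trace_majorana_monomial:
  assumes "S \<subseteq> {1..2*N}" "S \<noteq> {}"
  shows "mat_trace (majorana_monomial N S) = 0"
proof -
  have finS: "finite S" using assms finite_subset by blast
  define xs where "xs = sorted_list_of_set S"
  define j where "j = (Max S - 1) div 2"
  have MS: "Max S \<in> S" using finS assms by auto
  have M1: "1 \<le> Max S" "Max S \<le> 2*N" using MS assms by auto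
  then have jN: "j < N" using j_def by auto
  have setxs: "set xs = S" "distinct xs" using finS xs_def by auto
  have "\<forall>p\<in>set xs. 1 \<le> p \<and> (p - 1) div 2 \<le> j"
    using setxs assms finS unfolding j_def by (auto intro!: div_le_mono diff_le_mono)
  moreover have "Max S = 2*j+1 \<or> Max S = 2*j+2" using M1 j_def by auto
  ultimately have "monomial_code xs j \<in> {1,2,3}"
    using monomial_code_top_site[OF setxs(2)] MS setxs(1) by (auto simp: pauli_index_def)
  then have "mat_trace (pauli_string N (monomial_code xs)) = 0"
    by (rule mat_trace_pauli_string_eq_0[OF jN])
  moreover obtain \<mu> where "majorana_monomial N S = \<mu> \<cdot>\<^sub>m pauli_string N (monomial_code xs)"
    using majorana_product_eq_pauli_string unfolding majorana_monomial_def xs_def by blast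
  ultimately show ?thesis by (simp add: mat_trace_smult)
qed

section \<open>Qubit weight\<close>

lemma pauli_string_acts_trivially:
  assumes "j < N" "Q j = 0"
  shows "acts_trivially_on j (pauli_string N Q)"
  unfolding acts_trivially_on_def
proof (intro allI impI conjI)
  fix a b assume "a < dim_row (pauli_string N Q)" "b < dim_col (pauli_string N Q)"
  then have a: "a < 2^N" and b: "b < 2^N" by auto
  show "pauli_string N Q $$ (a, b) = 0" if "bit a j \<noteq> bit b j"
    using a b assms that by (auto simp: index_pauli_string pauli1_def intro!: prod_zero bexI[of _ j])
  have "flip_bit j a < 2^N" "flip_bit j b < 2^N" using a b assms flip_bit_less_two_power by auto
  then show "pauli_string N Q $$ (a, b) = pauli_string N Q $$ (flip_bit j a, flip_bit j b)"
    using a b assms by (auto simp: index_pauli_string bit_flip_bit_iff pauli1_def intro!: prod.cong)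
qed

lemma acts_trivially_on_smult:
  assumes "A \<in> carrier_mat (2^N) (2^N)" "j < N" "acts_trivially_on j A"
  shows "acts_trivially_on j (a \<cdot>\<^sub>m A)"
  using assms flip_bit_less_two_power unfolding acts_trivially_on_def by auto

lemma acts_trivially_on_mult:
  assumes A: "A \<in> carrier_mat (2^N) (2^N)" and B: "B \<in> carrier_mat (2^N) (2^N)" and j: "j < N"
    and tA: "acts_trivially_on j A" and tB: "acts_trivially_on j B"
  shows "acts_trivially_on j (A * B)"
  unfolding acts_trivially_on_def
proof (intro allI impI conjI)
  fix a b assume "a < dim_row (A * B)" "b < dim_col (A * B)"
  then have a: "a < 2^N" and b: "b < 2^N" using A B by auto
  have eA: "\<And>x y. x < 2^N \<Longrightarrow> y < 2^N \<Longrightarrow>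
      (bit x j \<noteq> bit y j \<longrightarrow> A $$ (x, y) = 0) \<and> A $$ (x, y) = A $$ (flip_bit j x, flip_bit j y)"
    using tA A unfolding acts_trivially_on_def by auto
  have eB: "\<And>x y. x < 2^N \<Longrightarrow> y < 2^N \<Longrightarrow>
      (bit x j \<noteq> bit y j \<longrightarrow> B $$ (x, y) = 0) \<and> B $$ (x, y) = B $$ (flip_bit j x, flip_bit j y)"
    using tB B unfolding acts_trivially_on_def by auto
  have entry: "\<And>x y. x < 2^N \<Longrightarrow> y < 2^N \<Longrightarrow> (A * B) $$ (x, y) = (\<Sum>k<2^N. A $$ (x, k) * B $$ (k, y))"
    using A B by (intro index_mult_mat_sum) auto
  show "(A * B) $$ (a, b) = 0" if "bit a j \<noteq> bit b j"
  proof -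
    have "A $$ (a, k) * B $$ (k, b) = 0" if "k < 2^N" for k
      using eA[OF a that] eB[OF that b] \<open>bit a j \<noteq> bit b j\<close> by (cases "bit a j = bit k j") auto
    then show ?thesis using entry[OF a b] by (auto intro!: sum.neutral)
  qed
  have fa: "flip_bit j a < 2^N" and fb: "flip_bit j b < 2^N" using a b j flip_bit_less_two_power by auto
  have "(A * B) $$ (flip_bit j a, flip_bit j b)
      = (\<Sum>k\<in>flip_bit j ` {..<2^N}. A $$ (flip_bit j a, k) * B $$ (k, flip_bit j b))"
    using entry[OF fa fb] flip_bit_image_less_two_power[OF j] by simp
  also have "\<dots> = (\<Sum>k<2^N. A $$ (flip_bit j a, flip_bit j k) * B $$ (flip_bit j k, flip_bit j b))"
    by (subst sum.reindex) (auto simp: inj_on_def, metis flip_bit_flip_bit)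
  also have "\<dots> = (A * B) $$ (a, b)"
    using eA eB a b entry[OF a b] by (auto intro!: sum.cong)
  finally show "(A * B) $$ (a, b) = (A * B) $$ (flip_bit j a, flip_bit j b)" by simp
qed

lemma qubit_weight_identity: "qubit_weight N (1\<^sub>m (2^N)) = 0"
proof -
  have "1\<^sub>m (2^N) = pauli_string N (\<lambda>_. 0)" by (rule pauli_string_identity[symmetric]) simp
  then show ?thesis using pauli_string_acts_trivially[of _ N "\<lambda>_. 0"] by (simp add: qubit_weight_def)
qed

definition jw_site :: "nat \<Rightarrow> nat" where
  "jw_site p = (p - 1) div 2"

definition jw_span :: "nat \<Rightarrow> nat \<Rightarrow> nat set" where
  "jw_span p q = {min (jw_site p) (jw_site q)..max (jw_site p) (jw_site q)}"

text \<open>Outside the span \<open>c\<^sub>p c\<^sub>q\<close> has \<open>Z Z = I\<close> below and \<open>I I = I\<close> above.\<close>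

lemma majorana_pair_acts_trivially_outside_span:
  assumes "j < N" "j \<notin> jw_span p q"
  shows "acts_trivially_on j (majorana N p * majorana N q)"
proof -
  have "j < jw_site p \<and> j < jw_site q \<or> jw_site p < j \<and> jw_site q < j"
    using assms(2) by (auto simp: jw_span_def)
  then have "jw_code p j = 3 \<and> jw_code q j = 3 \<or> jw_code p j = 0 \<and> jw_code q j = 0"
    by (auto simp: jw_site_def jw_code_def)
  then have "pauli_index (jw_code p j) (jw_code q j) = 0" by auto
  then have "acts_trivially_on j (pauli_string N (\<lambda>j. pauli_index (jw_code p j) (jw_code q j)))"
    using assms(1) by (intro pauli_string_acts_trivially) auto
  then show ?thesis
    unfolding majorana_mult_majorana using assms(1) by (intro acts_trivially_on_smult[of _ N]) auto
qed

lemma qubit_weight_le_toggle_pair: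
  assumes S: "S \<subseteq> {1..2*N}" and p: "p \<in> {1..2*N}" and q: "q \<in> {1..2*N}"
  shows "qubit_weight N (majorana_monomial N S)
       \<le> qubit_weight N (majorana_monomial N (toggle_pair p q S)) + card (jw_span p q)"
proof -
  define T where "T = toggle_pair p q S"
  let ?nontriv = "\<lambda>M. {j. j < N \<and> \<not> acts_trivially_on j M}"
  have TI: "T \<subseteq> {1..2*N}" using toggle_pair_subset[OF S p q] T_def by simp
  obtain s where s: "s = 1 \<or> s = -1"
    "majorana N p * (majorana N q * majorana_monomial N T) = s \<cdot>\<^sub>m majorana_monomial N S"
    using majorana_pair_mult_monomial[OF TI q p] unfolding T_def toggle_pair_swap_inverse by blast
  have "s \<cdot>\<^sub>m ((majorana N p * majorana N q) * majorana_monomial N T) = s \<cdot>\<^sub>m (s \<cdot>\<^sub>m majorana_monomial N S)"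
    by (subst assoc_mult_mat[of _ "2^N" "2^N" _ "2^N" _ "2^N"]) (auto simp: s(2))
  also have "\<dots> = majorana_monomial N S" using s(1) by (auto simp: smult_smult_mat)
  finally have ES: "majorana_monomial N S = s \<cdot>\<^sub>m ((majorana N p * majorana N q) * majorana_monomial N T)"
    by simp
  have "?nontriv (majorana_monomial N S) \<subseteq> ?nontriv (majorana_monomial N T) \<union> jw_span p q"
  proof (rule subsetI, rule ccontr)
    fix j assume j: "j \<in> ?nontriv (majorana_monomial N S)"
      and "j \<notin> ?nontriv (majorana_monomial N T) \<union> jw_span p q"
    then have "acts_trivially_on j (majorana_monomial N T)" "j \<notin> jw_span p q" by auto
    then have "acts_trivially_on j ((majorana N p * majorana N q) * majorana_monomial N T)"
      using j by (rule_tac acts_trivially_on_mult[of _ N]) (auto intro: majorana_pair_acts_trivially_outside_span)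
    then have "acts_trivially_on j (majorana_monomial N S)"
      unfolding ES using j by (intro acts_trivially_on_smult[of _ N]) auto
    then show False using j by simp
  qed
  then have "qubit_weight N (majorana_monomial N S) \<le> card (?nontriv (majorana_monomial N T) \<union> jw_span p q)"
    unfolding qubit_weight_def by (intro card_mono) (auto simp: jw_span_def)
  also have "\<dots> \<le> qubit_weight N (majorana_monomial N T) + card (jw_span p q)"
    unfolding qubit_weight_def by (rule card_Un_le)
  finally show ?thesis unfolding T_def .
qed

lemma card_jw_span_le: "2 * card (jw_span p q) \<le> nat \<bar>int p - int q\<bar> + 3"
proof -
  have *: "2 * ((b - 1) div 2 - (a - 1) div 2 + 1) \<le> b - a + 3" if "a \<le> b" for a b :: nat
  proof -
    have "(a - 1) div 2 \<le> (b - 1) div 2" "2 * ((b - 1) div 2) \<le> b - 1" "a - 1 \<le> 2 * ((a - 1) div 2) + 1"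
      using that by (simp_all add: div_le_mono)
    moreover have "\<And>x y. y \<le> x \<Longrightarrow> 2*x \<le> b - 1 \<Longrightarrow> a - 1 \<le> 2*y+1 \<Longrightarrow> 2*(x - y + 1) \<le> b - a + 3"
      using that by arith
    ultimately show ?thesis by blast
  qed
  show ?thesis
  proof (cases "p \<le> q")
    case True
    then have "jw_site p \<le> jw_site q" by (simp add: jw_site_def div_le_mono)
    then have "card (jw_span p q) = (q - 1) div 2 - (p - 1) div 2 + 1"
      by (simp add: jw_span_def jw_site_def Suc_diff_le)
    moreover have "nat \<bar>int p - int q\<bar> = q - p" using True by simp
    ultimately show ?thesis using *[OF True] True by simp
  next
    case False
    then have "jw_site q \<le> jw_site p" by (simp add: jw_site_def div_le_mono)
    then have "card (jw_span p q) = (p - 1) div 2 - (q - 1) div 2 + 1"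
      by (simp add: jw_span_def jw_site_def Suc_diff_le)
    moreover have "nat \<bar>int p - int q\<bar> = p - q" using False by simp
    ultimately show ?thesis using *[of q p] False by simp
  qed
qed

section \<open>Gronwall's inequality for a weighted system\<close>

lemma gronwall_integral:
  fixes \<Phi> :: "real \<Rightarrow> real"
  assumes cont: "continuous_on {0..1} \<Phi>" and K: "K \<ge> 0"
    and le: "\<And>t. t \<in> {0..1} \<Longrightarrow> \<Phi> t \<le> A + K * integral {0..t} \<Phi>"
  shows "\<Phi> 1 \<le> A * exp K"
proof -
  define G where "G t = integral {0..t} \<Phi>" for t
  have dG: "(G has_real_derivative \<Phi> t) (at t within {0..1})" if "t \<in> {0..1}" for t
    unfolding G_def by (rule integral_has_real_derivative[OF cont that])
  define F where "F t = exp (- K * t) * (A + K * G t)" for t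
  define F' where "F' t = exp (- K * t) * (K * \<Phi> t) + (- K * exp (- K * t)) * (A + K * G t)" for t
  have dF: "(F has_real_derivative F' t) (at t within {0..1})" if "t \<in> {0..1}" for t
    unfolding F_def F'_def by (auto intro!: derivative_eq_intros dG[OF that] simp: algebra_simps)
  have "(F' has_integral (F 1 - F 0)) {0..1}"
    by (rule fundamental_theorem_of_calculus)
      (auto simp: has_real_derivative_iff_has_vector_derivative[symmetric] dF)
  moreover have "F' t \<le> 0" if "t \<in> {0..1}" for t
  proof -
    have "F' t = K * exp (- K * t) * (\<Phi> t - (A + K * G t))" unfolding F'_def by (simp add: algebra_simps)
    moreover have "\<Phi> t - (A + K * G t) \<le> 0" using le[OF that] unfolding G_def by simp
    ultimately show ?thesis using K by (simp add: mult_nonneg_nonpos)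
  qed
  ultimately have "F 1 \<le> F 0"
    using has_integral_le[of F' "F 1 - F 0" "{0..1}" "\<lambda>_. 0" 0] by auto
  then have "exp (- K) * (A + K * G 1) \<le> A" unfolding F_def G_def by simp
  then have "A + K * G 1 \<le> A * exp K" by (simp add: exp_minus field_simps)
  moreover have "\<Phi> 1 \<le> A + K * G 1" using le[of 1] unfolding G_def by simp
  ultimately show ?thesis by simp
qed

lemma norm_le_norm_initial_plus_integral:
  fixes f :: "real \<Rightarrow> 'a::banach"
  assumes der: "\<And>u. u \<in> {0..1} \<Longrightarrow> (f has_vector_derivative f' u) (at u within {0..1})"
    and g: "continuous_on {0..1} g" and bound: "\<And>u. u \<in> {0..1} \<Longrightarrow> norm (f' u) \<le> g u"
    and t: "t \<in> {0..1}"
  shows "norm (f t) \<le> norm (f 0) + integral {0..t} g"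
proof -
  have "(f' has_integral (f t - f 0)) {0..t}"
    by (rule fundamental_theorem_of_calculus)
      (use t in \<open>auto intro: has_vector_derivative_within_subset[OF der]\<close>)
  moreover have "g integrable_on {0..t}"
    by (rule integrable_continuous_interval, rule continuous_on_subset[OF g]) (use t in auto)
  ultimately have "norm (integral {0..t} f') \<le> integral {0..t} g"
    using bound t by (intro integral_norm_bound_integral) auto
  then have "norm (f t - f 0) \<le> integral {0..t} g"
    using \<open>(f' has_integral (f t - f 0)) {0..t}\<close> by (simp add: integral_unique)
  then show ?thesis using norm_triangle_ineq2[of "f t" "f 0"] by simp
qed

text \<open>Reindexing each coupling by its involution \<open>\<sigma>\<^sub>k\<close> turns row sums into column sums.\<close>

lemma weighted_coupling_sum_le:
  fixes x w :: "'s \<Rightarrow> real" and \<alpha> :: "'k \<Rightarrow> real" and \<sigma> :: "'k \<Rightarrow> 's \<Rightarrow> 's"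
  assumes "finite Ss" "finite Ks"
    and into: "\<And>k S. k \<in> Ks \<Longrightarrow> S \<in> Ss \<Longrightarrow> \<sigma> k S \<in> Ss"
    and invol: "\<And>k S. k \<in> Ks \<Longrightarrow> S \<in> Ss \<Longrightarrow> \<sigma> k (\<sigma> k S) = S"
    and x: "\<And>S. S \<in> Ss \<Longrightarrow> x S \<ge> 0" and w: "\<And>S. S \<in> Ss \<Longrightarrow> w S > 0"
    and column: "\<And>T. T \<in> Ss \<Longrightarrow> (\<Sum>k\<in>Ks. \<alpha> k * (w T / w (\<sigma> k T))) \<le> K"
  shows "(\<Sum>S\<in>Ss. (\<Sum>k\<in>Ks. \<alpha> k * x (\<sigma> k S)) / w S) \<le> K * (\<Sum>S\<in>Ss. x S / w S)"
proof -
  have "(\<Sum>S\<in>Ss. (\<Sum>k\<in>Ks. \<alpha> k * x (\<sigma> k S)) / w S) = (\<Sum>k\<in>Ks. \<Sum>S\<in>Ss. \<alpha> k * x (\<sigma> k S) / w S)"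
    by (simp add: sum_divide_distrib sum.swap[of _ Ss])
  also have "\<dots> = (\<Sum>k\<in>Ks. \<Sum>T\<in>Ss. \<alpha> k * x T / w (\<sigma> k T))"
  proof (rule sum.cong[OF refl])
    fix k assume "k \<in> Ks"
    then show "(\<Sum>S\<in>Ss. \<alpha> k * x (\<sigma> k S) / w S) = (\<Sum>T\<in>Ss. \<alpha> k * x T / w (\<sigma> k T))"
      by (intro sum.reindex_bij_witness[of _ "\<sigma> k" "\<sigma> k"]) (use into invol in auto)
  qed
  also have "\<dots> = (\<Sum>T\<in>Ss. (x T / w T) * (\<Sum>k\<in>Ks. \<alpha> k * (w T / w (\<sigma> k T))))"
    unfolding sum.swap[of _ Ks] sum_distrib_left
    by (intro sum.cong refl) (use w in \<open>force simp: field_simps\<close>)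
  also have "\<dots> \<le> (\<Sum>T\<in>Ss. (x T / w T) * K)"
    by (intro sum_mono mult_left_mono column) (auto intro!: divide_nonneg_pos x w)
  also have "\<dots> = K * (\<Sum>S\<in>Ss. x S / w S)" by (simp add: sum_distrib_left mult.commute)
  finally show ?thesis .
qed

lemma gronwall_weighted_system:
  fixes f f' :: "'s \<Rightarrow> real \<Rightarrow> complex" and \<sigma> :: "'k \<Rightarrow> 's \<Rightarrow> 's"
    and \<alpha> :: "'k \<Rightarrow> real" and w :: "'s \<Rightarrow> real"
  assumes fin: "finite Ss" "finite Ks"
    and der: "\<And>S u. S \<in> Ss \<Longrightarrow> u \<in> {0..1} \<Longrightarrow> (f S has_vector_derivative f' S u) (at u within {0..1})"
    and bound: "\<And>S u. S \<in> Ss \<Longrightarrow> u \<in> {0..1} \<Longrightarrow> cmod (f' S u) \<le> (\<Sum>k\<in>Ks. \<alpha> k * cmod (f (\<sigma> k S) u))"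
    and into: "\<And>k S. k \<in> Ks \<Longrightarrow> S \<in> Ss \<Longrightarrow> \<sigma> k S \<in> Ss"
    and invol: "\<And>k S. k \<in> Ks \<Longrightarrow> S \<in> Ss \<Longrightarrow> \<sigma> k (\<sigma> k S) = S"
    and w: "\<And>S. S \<in> Ss \<Longrightarrow> w S > 0"
    and column: "\<And>T. T \<in> Ss \<Longrightarrow> (\<Sum>k\<in>Ks. \<alpha> k * (w T / w (\<sigma> k T))) \<le> K"
    and K: "K \<ge> 0" and S: "S \<in> Ss"
  shows "cmod (f S 1) \<le> w S * ((\<Sum>T\<in>Ss. cmod (f T 0) / w T) * exp K)"
proof -
  define \<Phi> where "\<Phi> t = (\<Sum>S\<in>Ss. cmod (f S t) / w S)" for t
  define g where "g S u = (\<Sum>k\<in>Ks. \<alpha> k * cmod (f (\<sigma> k S) u))" for S u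
  have contf: "continuous_on {0..1} (f S)" if "S \<in> Ss" for S
    using der[OF that] has_vector_derivative_continuous
    by (auto simp: continuous_on_eq_continuous_within) blast
  have contP: "continuous_on {0..1} \<Phi>"
    unfolding \<Phi>_def by (intro continuous_intros contf) (use w in fastforce)+
  have contg: "continuous_on {0..1} (g S)" if "S \<in> Ss" for S
    unfolding g_def by (intro continuous_intros contf into that) auto
  have "\<Phi> t \<le> \<Phi> 0 + K * integral {0..t} \<Phi>" if t: "t \<in> {0..1}" for t
  proof -
    have ig: "g S integrable_on {0..t}" if "S \<in> Ss" for S
      by (rule integrable_continuous_interval, rule continuous_on_subset[OF contg[OF that]]) (use t in auto)
    have "cmod (f S t) \<le> cmod (f S 0) + integral {0..t} (g S)" if S: "S \<in> Ss" for S
    proof (rule norm_le_norm_initial_plus_integral[OF der[OF S] contg[OF S] _ t])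
      show "cmod (f' S u) \<le> g S u" if "u \<in> {0..1}" for u
        using bound[OF S that] by (simp add: g_def)
    qed
    then have "\<Phi> t \<le> (\<Sum>S\<in>Ss. (cmod (f S 0) + integral {0..t} (g S)) / w S)"
      unfolding \<Phi>_def using w by (intro sum_mono divide_right_mono) (auto simp: less_imp_le)
    also have "\<dots> = \<Phi> 0 + integral {0..t} (\<lambda>u. \<Sum>S\<in>Ss. g S u / w S)"
      unfolding \<Phi>_def using ig
      by (simp add: add_divide_distrib sum.distrib integral_sum[OF fin(1)] integrable_on_divide)
    also have "\<dots> \<le> \<Phi> 0 + integral {0..t} (\<lambda>u. K * \<Phi> u)"
    proof (intro add_left_mono integral_le)
      show "(\<lambda>u. \<Sum>S\<in>Ss. g S u / w S) integrable_on {0..t}"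
        using ig by (intro integrable_sum[OF fin(1)] integrable_on_divide)
      show "(\<lambda>u. K * \<Phi> u) integrable_on {0..t}"
        by (intro integrable_continuous_interval continuous_intros continuous_on_subset[OF contP])
          (use t in auto)
      show "(\<Sum>S\<in>Ss. g S u / w S) \<le> K * \<Phi> u" for u
        unfolding g_def \<Phi>_def using fin into invol w column
        by (intro weighted_coupling_sum_le) auto
    qed
    finally show ?thesis by simp
  qed
  then have "\<Phi> 1 \<le> \<Phi> 0 * exp K" by (rule gronwall_integral[OF contP K])
  moreover have "cmod (f S 1) / w S \<le> \<Phi> 1"
    unfolding \<Phi>_def by (rule member_le_sum[OF S]) (auto intro!: divide_nonneg_pos w fin)
  ultimately have "cmod (f S 1) / w S \<le> \<Phi> 0 * exp K" by linarith
  then show ?thesis using w[OF S] unfolding \<Phi>_def by (simp add: field_simps)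
qed
section \<open>The coefficient equations\<close>

lemma quad_ham_carrier [simp]: "quad_ham N D \<in> carrier_mat (2^N) (2^N)"
  by (simp add: quad_ham_def)

text \<open>\<open>2\<^sup>-\<^sup>N tr(E\<^sup>\<dagger> U(t))\<close> written entrywise, so that it is defined for every \<open>t\<close>.\<close>

definition monomial_coeff :: "nat \<Rightarrow> (real \<Rightarrow> complex mat) \<Rightarrow> nat set \<Rightarrow> real \<Rightarrow> complex" where
  "monomial_coeff N U S t =
     (\<Sum>i<2^N. \<Sum>k<2^N. cnj (majorana_monomial N S $$ (k, i)) * U t $$ (k, i)) / 2^N"

lemma monomial_coeff_eq_expansion_coeff:
  assumes "U t \<in> carrier_mat (2^N) (2^N)"
  shows "monomial_coeff N U S t = expansion_coeff N (majorana_monomial N S) (U t)"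
  unfolding monomial_coeff_def expansion_coeff_def by (simp add: mat_trace_adjoint_mult[OF _ assms])

lemma has_vector_derivative_monomial_coeff:
  assumes U: "solves_tord_exp N (\<lambda>u. quad_ham N (D u)) U" and u: "u \<in> {0..1}"
  shows "(monomial_coeff N U S has_vector_derivative
           (\<i> * mat_trace (mat_adjoint (majorana_monomial N S) * (quad_ham N (D u) * U u)) / 2^N))
         (at u within {0..1})"
proof -
  have "U u \<in> carrier_mat (2^N) (2^N)" using U u unfolding solves_tord_exp_def by auto
  then have HU: "quad_ham N (D u) * U u \<in> carrier_mat (2^N) (2^N)"
    by (metis mult_carrier_mat quad_ham_carrier)
  have "((\<lambda>t. U t $$ (k, i)) has_vector_derivative (\<i> * (quad_ham N (D u) * U u) $$ (k, i))) (at u within {0..1})"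
    if "k < 2^N" "i < 2^N" for k i
    using U u that unfolding solves_tord_exp_def by auto
  then have "(monomial_coeff N U S has_vector_derivative
      (\<Sum>i<2^N. \<Sum>k<2^N. cnj (majorana_monomial N S $$ (k, i)) * (\<i> * (quad_ham N (D u) * U u) $$ (k, i))) / 2^N)
      (at u within {0..1})"
    unfolding monomial_coeff_def[abs_def]
    by (intro has_vector_derivative_divide has_vector_derivative_sum has_vector_derivative_mult_right) auto
  then show ?thesis
    by (simp add: mat_trace_adjoint_mult[OF _ HU] sum_distrib_left mult_ac)
qed

lemma sum_swap_pairs:
  "(\<Sum>k\<in>K. \<Sum>l\<in>L. \<Sum>p\<in>P. \<Sum>q\<in>Q. F p q k l)
     = (\<Sum>p\<in>P. \<Sum>q\<in>Q. \<Sum>k\<in>K. \<Sum>l\<in>L. (F p q k l :: 'a::comm_monoid_add))"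
proof -
  have "(\<Sum>k\<in>K. \<Sum>l\<in>L. \<Sum>p\<in>P. \<Sum>q\<in>Q. F p q k l) = (\<Sum>k\<in>K. \<Sum>p\<in>P. \<Sum>l\<in>L. \<Sum>q\<in>Q. F p q k l)"
    by (rule sum.cong[OF refl], rule sum.swap)
  also have "\<dots> = (\<Sum>p\<in>P. \<Sum>k\<in>K. \<Sum>q\<in>Q. \<Sum>l\<in>L. F p q k l)"
    by (subst sum.swap) (intro sum.cong refl sum.swap)
  also have "\<dots> = (\<Sum>p\<in>P. \<Sum>q\<in>Q. \<Sum>k\<in>K. \<Sum>l\<in>L. F p q k l)"
    by (intro sum.cong refl sum.swap)
  finally show ?thesis .
qed

lemma mat_trace_quad_ham:
  fixes A V :: "complex mat"
  assumes A: "A \<in> carrier_mat (2^N) (2^N)" and V: "V \<in> carrier_mat (2^N) (2^N)"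
  shows "mat_trace (A * (quad_ham N D * V))
       = (\<i> / 4) * (\<Sum>p\<in>{1..2*N}. \<Sum>q\<in>{1..2*N}.
            complex_of_real (D p q) * mat_trace (A * ((majorana N p * majorana N q) * V)))"
proof -
  define C where "C k l = (\<Sum>i<2^N. A $$ (i, k) * V $$ (l, i))" for k l
  let ?M = "\<lambda>p q. majorana N p * majorana N q"
  have "mat_trace (A * (quad_ham N D * V)) = (\<Sum>k<2^N. \<Sum>l<2^N. quad_ham N D $$ (k, l) * C k l)"
    unfolding C_def by (rule mat_trace_mult_mult[OF A _ V]) simp
  also have "\<dots> = (\<Sum>k<2^N. \<Sum>l<2^N. \<Sum>p\<in>{1..2*N}. \<Sum>q\<in>{1..2*N}.
        (\<i> / 4) * (complex_of_real (D p q) * (?M p q $$ (k, l) * C k l)))"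
    by (intro sum.cong refl) (simp add: quad_ham_def sum_distrib_left sum_distrib_right mult_ac)
  also have "\<dots> = (\<Sum>p\<in>{1..2*N}. \<Sum>q\<in>{1..2*N}. \<Sum>k<2^N. \<Sum>l<2^N.
        (\<i> / 4) * (complex_of_real (D p q) * (?M p q $$ (k, l) * C k l)))"
    by (rule sum_swap_pairs)
  also have "\<dots> = (\<i> / 4) * (\<Sum>p\<in>{1..2*N}. \<Sum>q\<in>{1..2*N}. complex_of_real (D p q) *
        (\<Sum>k<2^N. \<Sum>l<2^N. ?M p q $$ (k, l) * C k l))"
    by (simp add: sum_distrib_left)
  also have "\<dots> = (\<i> / 4) * (\<Sum>p\<in>{1..2*N}. \<Sum>q\<in>{1..2*N}.
        complex_of_real (D p q) * mat_trace (A * (?M p q * V)))"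
    unfolding C_def by (subst mat_trace_mult_mult[OF A _ V]) auto
  finally show ?thesis .
qed

lemma norm_deriv_monomial_coeff_le:
  assumes S: "S \<subseteq> {1..2*N}" and Uc: "U u \<in> carrier_mat (2^N) (2^N)"
  shows "cmod (\<i> * mat_trace (mat_adjoint (majorana_monomial N S) * (quad_ham N (D u) * U u)) / 2^N)
     \<le> (\<Sum>p\<in>{1..2*N}. \<Sum>q\<in>{1..2*N}. \<bar>D u p q\<bar> / 4 * cmod (monomial_coeff N U (toggle_pair p q S) u))"
proof -
  let ?t = "\<lambda>p q. mat_trace (mat_adjoint (majorana_monomial N S) * ((majorana N p * majorana N q) * U u))"
  have "mat_trace (mat_adjoint (majorana_monomial N S) * (quad_ham N (D u) * U u))
     = (\<i> / 4) * (\<Sum>p\<in>{1..2*N}. \<Sum>q\<in>{1..2*N}. complex_of_real (D u p q) * ?t p q)"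
    by (rule mat_trace_quad_ham) (auto simp: Uc)
  note expand = this
  have "cmod (\<i> * mat_trace (mat_adjoint (majorana_monomial N S) * (quad_ham N (D u) * U u)) / 2^N)
     = cmod (\<Sum>p\<in>{1..2*N}. \<Sum>q\<in>{1..2*N}. complex_of_real (D u p q) * ?t p q) / 4 / 2^N"
    unfolding expand by (simp add: norm_mult norm_divide norm_power)
  also have "\<dots> \<le> (\<Sum>p\<in>{1..2*N}. \<Sum>q\<in>{1..2*N}. cmod (complex_of_real (D u p q) * ?t p q)) / 4 / 2^N"
    by (intro divide_right_mono order.trans[OF norm_sum] sum_mono norm_sum) auto
  also have "\<dots> = (\<Sum>p\<in>{1..2*N}. \<Sum>q\<in>{1..2*N}. \<bar>D u p q\<bar> / 4 * cmod (monomial_coeff N U (toggle_pair p q S) u))"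
  proof -
    have "cmod (?t p q) = cmod (monomial_coeff N U (toggle_pair p q S) u) * 2^N"
      if "p \<in> {1..2*N}" "q \<in> {1..2*N}" for p q
      using mat_trace_adjoint_monomial_pair[OF S that Uc] monomial_coeff_eq_expansion_coeff[of U u N, OF Uc]
      by (simp add: expansion_coeff_def norm_divide norm_power)
    then show ?thesis
      unfolding sum_divide_distrib by (intro sum.cong refl) (simp add: norm_mult)
  qed
  finally show ?thesis .
qed

lemma expansion_coeff_identity:
  assumes "S \<subseteq> {1..2*N}"
  shows "expansion_coeff N (majorana_monomial N S) (1\<^sub>m (2^N)) = (if S = {} then 1 else 0)"
proof -
  have trace: "expansion_coeff N (majorana_monomial N S) (1\<^sub>m (2^N))
      = cnj (mat_trace (majorana_monomial N S)) / 2^N"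
    by (simp add: expansion_coeff_def mat_trace_adjoint[OF majorana_monomial_carrier])
  show ?thesis
  proof (cases "S = {}")
    case True
    then show ?thesis unfolding trace by (simp add: majorana_monomial_empty mat_trace_def)
  qed (simp add: trace mat_trace_majorana_monomial[OF assms])
qed
section \<open>Estimates for the weights\<close>

lemma sum_power_le_geometric:
  fixes \<mu> :: real assumes "0 \<le> \<mu>" "\<mu> < 1" "finite F"
  shows "(\<Sum>d\<in>F. \<mu> ^ d) \<le> 1 / (1 - \<mu>)"
proof -
  have "summable (\<lambda>n. \<mu> ^ n)" using assms by (intro summable_geometric) simp
  then have "(\<Sum>d\<in>F. \<mu> ^ d) \<le> (\<Sum>n. \<mu> ^ n)" using assms by (intro sum_le_suminf) auto
  also have "\<dots> = 1 / (1 - \<mu>)" using assms by (intro suminf_geometric) simp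
  finally show ?thesis .
qed

lemma sum_power_dist_le:
  fixes \<mu> :: real assumes "0 \<le> \<mu>" "\<mu> < 1"
  shows "(\<Sum>q\<in>{1..M}. \<mu> ^ nat \<bar>int p - int q\<bar>) \<le> 2 / (1 - \<mu>)"
proof -
  define A where "A = {q \<in> {1..M}. q \<le> p}"
  define B where "B = {q \<in> {1..M}. \<not> q \<le> p}"
  have "{1..M} = A \<union> B" "A \<inter> B = {}" "finite A" "finite B" unfolding A_def B_def by auto
  then have "(\<Sum>q\<in>{1..M}. \<mu> ^ nat \<bar>int p - int q\<bar>)
      = (\<Sum>q\<in>A. \<mu> ^ nat \<bar>int p - int q\<bar>) + (\<Sum>q\<in>B. \<mu> ^ nat \<bar>int p - int q\<bar>)"
    by (simp add: sum.union_disjoint)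
  also have "\<dots> = (\<Sum>q\<in>A. \<mu> ^ (p - q)) + (\<Sum>q\<in>B. \<mu> ^ (q - p))"
    by (intro arg_cong2[where f="(+)"] sum.cong refl) (auto simp: A_def B_def nat_diff_distrib)
  also have "\<dots> = (\<Sum>d\<in>(\<lambda>q. p - q) ` A. \<mu> ^ d) + (\<Sum>d\<in>(\<lambda>q. q - p) ` B. \<mu> ^ d)"
    by (subst (1 2) sum.reindex) (auto simp: inj_on_def A_def B_def)
  also have "\<dots> \<le> 1 / (1 - \<mu>) + 1 / (1 - \<mu>)"
    by (intro add_mono sum_power_le_geometric assms) (auto simp: A_def B_def)
  finally show ?thesis by simp
qed

lemma decay_base_bounds:
  fixes r :: real assumes "r \<ge> 1"
  shows "2/3 \<le> (2/3::real) powr (1/(4*r))" "(2/3::real) powr (1/(4*r)) < 1"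
proof -
  have "(2/3::real) powr 1 \<le> (2/3) powr (1/(4*r))"
    by (rule powr_mono') (use assms in \<open>auto simp: field_simps\<close>)
  then show "2/3 \<le> (2/3::real) powr (1/(4*r))" by simp
  have "ln (2/3::real) / (4*r) < 0" using assms by (intro divide_neg_pos ln_less_zero) auto
  then show "(2/3::real) powr (1/(4*r)) < 1" by (simp add: powr_def)
qed

definition monomial_weight :: "real \<Rightarrow> real \<Rightarrow> nat \<Rightarrow> nat set \<Rightarrow> real" where
  "monomial_weight \<epsilon> lam N S = \<epsilon> powr (real (card S) / 4) * lam ^ qubit_weight N (majorana_monomial N S)"

lemma monomial_weight_pos: "0 < \<epsilon> \<Longrightarrow> 0 < lam \<Longrightarrow> 0 < monomial_weight \<epsilon> lam N S"
  by (simp add: monomial_weight_def)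

lemma monomial_weight_empty: "0 < \<epsilon> \<Longrightarrow> monomial_weight \<epsilon> lam N {} = 1"
  by (simp add: monomial_weight_def majorana_monomial_empty qubit_weight_identity)

text \<open>With \<open>\<mu>\<^sup>2 = \<lambda>\<close>, half of the decay \<open>\<lambda>\<^bsup>d\<^esup>\<close> pays for the qubit weight lost across a span
  of at most \<open>(d + 3)/2\<close> sites, and \<open>\<epsilon>\<close> pays for two fermionic indices.\<close>

lemma weight_ratio_le:
  fixes \<epsilon> \<mu> a :: real and n n' m m' g d :: nat
  assumes "0 < \<epsilon>" "\<epsilon> < 1" "0 < \<mu>" "\<mu> \<le> 1" "0 \<le> a"
    and n: "n' \<le> n + 2" and m: "m' \<le> m + g" and g: "2 * g \<le> d + 3"
  shows "(a * \<epsilon> * (\<mu>^2)^d / 4) * ((\<epsilon> powr (real n / 4) * (\<mu>^2)^m) / (\<epsilon> powr (real n' / 4) * (\<mu>^2)^m'))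
         \<le> (sqrt \<epsilon> * a / 4) * \<mu>^d / \<mu>^3"
proof -
  have "\<epsilon> powr (real n / 4) / \<epsilon> powr (real n' / 4) = \<epsilon> powr (real n / 4 - real n' / 4)"
    by (simp add: powr_diff)
  also have "\<dots> \<le> \<epsilon> powr (-1/2)" by (rule powr_mono') (use n assms in auto)
  finally have e: "\<epsilon> powr (real n / 4) / \<epsilon> powr (real n' / 4) \<le> \<epsilon> powr (-1/2)" .
  have "(\<mu>^2)^m * (\<mu>^2)^g \<le> (\<mu>^2)^m'"
    unfolding power_add[symmetric] by (rule power_decreasing[OF m]) (use assms in \<open>auto simp: power_le_one\<close>)
  moreover have "\<mu>^(d+3) \<le> (\<mu>^2)^g"
    unfolding power_mult[symmetric] by (rule power_decreasing[OF g]) (use assms in auto)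
  ultimately have "(\<mu>^2)^m * \<mu>^(d+3) \<le> (\<mu>^2)^m'"
    by (smt (verit) assms(3) mult_left_mono zero_le_power zero_less_power)
  then have l: "(\<mu>^2)^m / (\<mu>^2)^m' \<le> 1 / \<mu>^(d+3)" using assms by (simp add: field_simps)
  have "(\<epsilon> powr (real n / 4) * (\<mu>^2)^m) / (\<epsilon> powr (real n' / 4) * (\<mu>^2)^m')
      = (\<epsilon> powr (real n / 4) / \<epsilon> powr (real n' / 4)) * ((\<mu>^2)^m / (\<mu>^2)^m')"
    by simp
  also have "\<dots> \<le> \<epsilon> powr (-1/2) * (1 / \<mu>^(d+3))"
    by (intro mult_mono e l) (use assms in auto)
  finally have r: "(\<epsilon> powr (real n / 4) * (\<mu>^2)^m) / (\<epsilon> powr (real n' / 4) * (\<mu>^2)^m')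
      \<le> \<epsilon> powr (-1/2) / \<mu>^(d+3)" by simp
  have sq: "\<epsilon> * \<epsilon> powr (-1/2) = sqrt \<epsilon>"
    using assms by (simp add: powr_mult_base powr_half_sqrt[symmetric])
  have m2: "(\<mu>^2)^d = \<mu>^d * \<mu>^d" and m3: "\<mu>^(d+3) = \<mu>^d * \<mu>^3"
    by (simp_all add: power2_eq_square power_mult_distrib power_add)
  have "(a * \<epsilon> * (\<mu>^2)^d / 4) * ((\<epsilon> powr (real n / 4) * (\<mu>^2)^m) / (\<epsilon> powr (real n' / 4) * (\<mu>^2)^m'))
      \<le> (a * \<epsilon> * (\<mu>^2)^d / 4) * (\<epsilon> powr (-1/2) / \<mu>^(d+3))"
    by (rule mult_left_mono[OF r]) (use assms in auto)
  also have "\<dots> = (\<epsilon> * \<epsilon> powr (-1/2)) * a / 4 * \<mu>^d / \<mu>^3"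
    unfolding m2 m3 using assms by (simp add: field_simps)
  finally show ?thesis unfolding sq by simp
qed

lemma coupling_term_le:
  assumes eps: "0 < \<epsilon>" "\<epsilon> < 1" and lam: "0 < lam" "lam \<le> 1" and a: "0 \<le> a"
    and T: "T \<subseteq> {1..2*N}" and p: "p \<in> {1..2*N}" and q: "q \<in> {1..2*N}"
  shows "a * \<epsilon> * lam ^ nat \<bar>int p - int q\<bar> / 4
           * (monomial_weight \<epsilon> lam N T / monomial_weight \<epsilon> lam N (toggle_pair p q T))
         \<le> (sqrt \<epsilon> * a / 4) * sqrt lam ^ nat \<bar>int p - int q\<bar> / sqrt lam ^ 3"
proof -
  have TI: "toggle_pair p q T \<subseteq> {1..2*N}" by (rule toggle_pair_subset[OF T p q])
  have n: "card (toggle_pair p q T) \<le> card T + 2"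
    using card_le_card_toggle_pair[of "toggle_pair p q T" p q] finite_subset[OF TI] by simp
  have m: "qubit_weight N (majorana_monomial N (toggle_pair p q T))
      \<le> qubit_weight N (majorana_monomial N T) + card (jw_span p q)"
    using qubit_weight_le_toggle_pair[OF TI p q] by simp
  have "lam = (sqrt lam)^2" using lam by simp
  then show ?thesis
    unfolding monomial_weight_def
    using weight_ratio_le[OF eps _ _ a n m card_jw_span_le, of "sqrt lam"] lam by (simp add: mult_ac)
qed

lemma coupling_column_sum_le:
  assumes eps: "0 < \<epsilon>" "\<epsilon> < 1" and lam: "2/3 \<le> lam" "lam < 1" and a: "0 \<le> a"
    and T: "T \<subseteq> {1..2*N}"
  shows "(\<Sum>p\<in>{1..2*N}. \<Sum>q\<in>{1..2*N}. a * \<epsilon> * lam ^ nat \<bar>int p - int q\<bar> / 4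
            * (monomial_weight \<epsilon> lam N T / monomial_weight \<epsilon> lam N (toggle_pair p q T)))
         \<le> 3 * sqrt \<epsilon> * a / (1 - sqrt lam) * real N"
proof -
  define \<mu> where "\<mu> = sqrt lam"
  have \<mu>: "0 < \<mu>" "\<mu> < 1" using lam unfolding \<mu>_def by auto
  have "(4/5::real)^3 \<le> \<mu>^3"
    unfolding \<mu>_def by (intro power_mono real_le_rsqrt) (use lam in \<open>auto simp: power2_eq_square\<close>)
  then have \<mu>3: "1 / \<mu>^3 \<le> 3" using \<mu> by (simp add: field_simps power3_eq_cube)
  have "(\<Sum>p\<in>{1..2*N}. \<Sum>q\<in>{1..2*N}. a * \<epsilon> * lam ^ nat \<bar>int p - int q\<bar> / 4
            * (monomial_weight \<epsilon> lam N T / monomial_weight \<epsilon> lam N (toggle_pair p q T)))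
      \<le> (\<Sum>p\<in>{1..2*N}. \<Sum>q\<in>{1..2*N}. (sqrt \<epsilon> * a / 4) * \<mu> ^ nat \<bar>int p - int q\<bar> / \<mu>^3)"
    unfolding \<mu>_def using eps lam a T by (intro sum_mono coupling_term_le) auto
  also have "\<dots> = (sqrt \<epsilon> * a / 4) / \<mu>^3 * (\<Sum>p\<in>{1..2*N}. \<Sum>q\<in>{1..2*N}. \<mu> ^ nat \<bar>int p - int q\<bar>)"
    by (simp add: sum_distrib_left)
  also have "\<dots> \<le> (sqrt \<epsilon> * a / 4) / \<mu>^3 * (\<Sum>p\<in>{1..2*N}. 2 / (1 - \<mu>))"
    by (intro mult_left_mono sum_mono sum_power_dist_le) (use \<mu> eps a in auto)
  also have "\<dots> = (sqrt \<epsilon> * a * real N / (1 - \<mu>)) * (1 / \<mu>^3)"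
    using \<mu> by (simp add: field_simps)
  also have "\<dots> \<le> (sqrt \<epsilon> * a * real N / (1 - \<mu>)) * 3"
    by (rule mult_left_mono[OF \<mu>3]) (use eps a \<mu> in auto)
  finally show ?thesis unfolding \<mu>_def by (simp add: field_simps)
qed

lemma weighted_sum_initial_monomial_coeff:
  assumes "U 0 = 1\<^sub>m (2^N)" "0 < \<epsilon>"
  shows "(\<Sum>T\<in>{T. T \<subseteq> {1..2*N}}. cmod (monomial_coeff N U T 0) / monomial_weight \<epsilon> lam N T) = 1"
proof -
  have "cmod (monomial_coeff N U T 0) / monomial_weight \<epsilon> lam N T = (if T = {} then 1 else 0)"
    if "T \<subseteq> {1..2*N}" for T
    using that assms
    by (simp add: monomial_coeff_eq_expansion_coeff expansion_coeff_identity monomial_weight_empty)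
  then show ?thesis by (simp add: sum.If_cases)
qed

lemma norm_expansion_coeff_le:
  fixes D :: "real \<Rightarrow> nat \<Rightarrow> nat \<Rightarrow> real" and U :: "real \<Rightarrow> complex mat"
  assumes eps: "0 < \<epsilon>" "\<epsilon> < 1" and lam: "2/3 \<le> lam" "lam < 1" and a: "0 \<le> a"
    and decay: "\<And>u p q. u \<in> {0..1} \<Longrightarrow> p \<in> {1..2*N} \<Longrightarrow> q \<in> {1..2*N} \<Longrightarrow>
                  \<bar>D u p q\<bar> \<le> a * \<epsilon> * lam ^ nat \<bar>int p - int q\<bar>"
    and U: "solves_tord_exp N (\<lambda>u. quad_ham N (D u)) U"
    and S: "S \<subseteq> {1..2*N}"
  shows "cmod (expansion_coeff N (majorana_monomial N S) (U 1))
       \<le> monomial_weight \<epsilon> lam N S * exp (3 * sqrt \<epsilon> * a / (1 - sqrt lam) * real N)"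
proof -
  define I where "I = {1..2*N}"
  define w where "w = monomial_weight \<epsilon> lam N"
  define \<alpha> where "\<alpha> k = a * \<epsilon> * lam ^ nat \<bar>int (fst k) - int (snd k)\<bar> / 4" for k :: "nat \<times> nat"
  define K where "K = 3 * sqrt \<epsilon> * a / (1 - sqrt lam) * real N"
  have Uc: "U u \<in> carrier_mat (2^N) (2^N)" if "u \<in> {0..1}" for u
    using U that unfolding solves_tord_exp_def by auto
  have "cmod (monomial_coeff N U S 1)
      \<le> w S * ((\<Sum>T\<in>{T. T \<subseteq> I}. cmod (monomial_coeff N U T 0) / w T) * exp K)"
  proof (rule gronwall_weighted_system[where Ks = "I \<times> I" and \<sigma> = "\<lambda>k. toggle_pair (fst k) (snd k)"
        and \<alpha> = \<alpha> and f' = "\<lambda>S u. \<i> * mat_trace (mat_adjoint (majorana_monomial N S) * (quad_ham N (D u) * U u)) / 2^N"])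
    show "cmod (\<i> * mat_trace (mat_adjoint (majorana_monomial N T) * (quad_ham N (D u) * U u)) / 2^N)
        \<le> (\<Sum>k\<in>I \<times> I. \<alpha> k * cmod (monomial_coeff N U (toggle_pair (fst k) (snd k) T) u))"
      if T: "T \<in> {T. T \<subseteq> I}" and u: "u \<in> {0..1}" for T u
    proof -
      have "cmod (\<i> * mat_trace (mat_adjoint (majorana_monomial N T) * (quad_ham N (D u) * U u)) / 2^N)
          \<le> (\<Sum>p\<in>I. \<Sum>q\<in>I. \<bar>D u p q\<bar> / 4 * cmod (monomial_coeff N U (toggle_pair p q T) u))"
        unfolding I_def by (rule norm_deriv_monomial_coeff_le) (use T Uc[OF u] in \<open>auto simp: I_def\<close>)
      also have "\<dots> \<le> (\<Sum>p\<in>I. \<Sum>q\<in>I. \<alpha> (p, q) * cmod (monomial_coeff N U (toggle_pair p q T) u))"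
        using decay[OF u] by (intro sum_mono mult_right_mono) (auto simp: \<alpha>_def I_def)
      finally show ?thesis by (simp add: sum.cartesian_product case_prod_beta)
    qed
    show "(\<Sum>k\<in>I \<times> I. \<alpha> k * (w T / w (toggle_pair (fst k) (snd k) T))) \<le> K" if "T \<in> {T. T \<subseteq> I}" for T
      using coupling_column_sum_le[OF eps lam a, of T N] that
      by (simp add: sum.cartesian_product case_prod_beta \<alpha>_def w_def K_def I_def)
    show "toggle_pair (fst k) (snd k) T \<in> {T. T \<subseteq> I}" if "k \<in> I \<times> I" "T \<in> {T. T \<subseteq> I}" for k T
      using that unfolding I_def by (intro CollectI toggle_pair_subset) (auto simp: mem_Times_iff)
    show "0 \<le> K" unfolding K_def using eps a lam by (auto intro!: divide_nonneg_pos)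
  qed (use eps lam U S in \<open>auto simp: I_def w_def has_vector_derivative_monomial_coeff monomial_weight_pos\<close>)
  moreover have "(\<Sum>T\<in>{T. T \<subseteq> I}. cmod (monomial_coeff N U T 0) / w T) = 1"
    using U eps unfolding I_def w_def solves_tord_exp_def by (intro weighted_sum_initial_monomial_coeff) auto
  ultimately show ?thesis
    using Uc[of 1] by (simp add: monomial_coeff_eq_expansion_coeff w_def K_def)
qed

theorem mainTheorem9:
  fixes N :: nat and r \<epsilon> c :: real
    and D :: "real \<Rightarrow> nat \<Rightarrow> nat \<Rightarrow> real"
    and U :: "real \<Rightarrow> complex mat"
  assumes r: "r \<ge> 1"
    and eps: "0 < \<epsilon>" "\<epsilon> < 1/4"
    and c: "c > 0"
    and antisym: "\<And>u p q. u \<in> {0..1} \<Longrightarrow> p \<in> {1..2*N} \<Longrightarrow> q \<in> {1..2*N} \<Longrightarrow>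
                    D u p q = - D u q p"
    and decay: "\<And>u p q. u \<in> {0..1} \<Longrightarrow> p \<in> {1..2*N} \<Longrightarrow> q \<in> {1..2*N} \<Longrightarrow>
                    \<bar>D u p q\<bar> \<le> c * \<epsilon> * r^2 * ((2/3) powr (1 / (4*r))) ^ (nat \<bar>int p - int q\<bar>)"
    and U: "solves_tord_exp N (\<lambda>u. quad_ham N (D u)) U"
  shows "\<forall>S. S \<subseteq> {1..2*N} \<longrightarrow>
           cmod (expansion_coeff N (majorana_monomial N S) (U 1))
             \<le> \<epsilon> powr (real (fermionic_weight S) / 4)
                * ((2/3) powr (1 / (4*r))) ^ qubit_weight N (majorana_monomial N S)
                * exp (3 * sqrt \<epsilon> * c * r^2 / (1 - sqrt ((2/3) powr (1 / (4*r)))) * real N)"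
proof (intro allI impI)
  fix S assume S: "S \<subseteq> {1..2*N}"
  have "\<epsilon> < 1" using eps by simp
  moreover have "c * r^2 \<ge> 0" using c by simp
  moreover have "\<bar>D u p q\<bar> \<le> (c * r^2) * \<epsilon> * ((2/3) powr (1 / (4*r))) ^ (nat \<bar>int p - int q\<bar>)"
    if "u \<in> {0..1}" "p \<in> {1..2*N}" "q \<in> {1..2*N}" for u p q
    using decay[OF that] by (simp add: mult_ac)
  ultimately show "cmod (expansion_coeff N (majorana_monomial N S) (U 1))
             \<le> \<epsilon> powr (real (fermionic_weight S) / 4)
                * ((2/3) powr (1 / (4*r))) ^ qubit_weight N (majorana_monomial N S)
                * exp (3 * sqrt \<epsilon> * c * r^2 / (1 - sqrt ((2/3) powr (1 / (4*r)))) * real N)"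
    using norm_expansion_coeff_le[OF eps(1) _ decay_base_bounds[OF r], where a = "c * r^2" and D = D and U = U and S = S] U S
    by (simp add: monomial_weight_def fermionic_weight_def mult_ac)
qed

end
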